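(* Let $\eta\colon K[x]\to\Gamma'\cup\{\infty\}$ be a valuation extending $v$, with respect to some order-preserving embedding $\iota\colon\Gamma\hookrightarrow\Gamma'$ of ordered abelian groups, and embed $\Gamma_{\mathbb Q}\hookrightarrow\Gamma'_{\mathbb Q}$ via $\iota\otimes\mathbb Q$. Then the following are equivalent: (1) $\eta(f)\le\mu(f)$ for all $f\in K[x]$ and all $\mu\in\mathbb V$; (2) $\eta(x)<\gamma$ for all $\gamma\in\Gamma_{\mathbb Q}$; (3) $\eta$ is equivalent to $\mu_{-\infty}$.
   Context: Let $(K,v)$ be a valued field with non-trivial value group $\Gamma=v(K^* )$, and let $\Gamma_{\mathbb Q}=\Gamma\otimes\mathbb Q$ with its induced order (similarly $\Gamma'_{\mathbb Q}=\Gamma'\otimes\mathbb Q$). Let $\mathbb V$ be the set of valuations $\mu\colon K[x]\to\Gamma_{\mathbb Q}\cup\{\infty\}$ whose restriction to $K$ is $v$. The valuation $\mu_{-\infty}\colon K[x]\to(\mathbb Z\times\Gamma)_{\mathrm{lex}}\cup\{\infty\}$ is $f\mapsto(-\deg f,\,v(\mathrm{lc}(f)))$, where $\mathrm{lc}(f)$ is the leading coefficient and $(\mathbb Z\times\Gamma)_{\mathrm{lex}}$ has the lexicographic order. Two valuations $\eta,\eta'$ on $K[x]$ are equivalent if there is an order-preserving group isomorphism $j$ between their value groups with $\eta=j\circ\eta'$ on $K[x]\setminus\{0\}$. *)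

theory Defs
  imports "HOL-Computational_Algebra.Polynomial" "HOL-Library.Product_Lexorder" "HOL-Library.Product_Plus"
begin

definition nsmul :: "nat \<Rightarrow> 'a::monoid_add \<Rightarrow> 'a" where
  "nsmul n a = (((+) a) ^^ n) 0"

text \<open>A valuation on the field K, given on K^* (v 0 = \<infinity> by convention).\<close>
definition field_valuation :: "('k::field \<Rightarrow> 'g::linordered_ab_group_add) \<Rightarrow> bool" where
  "field_valuation v \<longleftrightarrow>
     (\<forall>a b. a \<noteq> 0 \<longrightarrow> b \<noteq> 0 \<longrightarrow> v (a * b) = v a + v b) \<and>
     (\<forall>a b. a \<noteq> 0 \<longrightarrow> b \<noteq> 0 \<longrightarrow> a + b \<noteq> 0 \<longrightarrow> min (v a) (v b) \<le> v (a + b))"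

text \<open>A valuation on K[x], given on the nonzero polynomials (w 0 = \<infinity> by convention).\<close>
definition poly_valuation :: "('k::field poly \<Rightarrow> 'b::{linorder, plus}) \<Rightarrow> bool" where
  "poly_valuation w \<longleftrightarrow>
     (\<forall>f g. f \<noteq> 0 \<longrightarrow> g \<noteq> 0 \<longrightarrow> w (f * g) = w f + w g) \<and>
     (\<forall>f g. f \<noteq> 0 \<longrightarrow> g \<noteq> 0 \<longrightarrow> f + g \<noteq> 0 \<longrightarrow> min (w f) (w g) \<le> w (f + g))"

definition order_embedding :: "('a::linordered_ab_group_add \<Rightarrow> 'b::linordered_ab_group_add) \<Rightarrow> bool" where
  "order_embedding j \<longleftrightarrow> (\<forall>a b. j (a + b) = j a + j b) \<and> (\<forall>a b. a \<le> b \<longleftrightarrow> j a \<le> j b)"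

text \<open>j : G -> Q exhibits the ordered group Q as G \<otimes> \<rat> (divisible hull) with its induced order.\<close>
definition divisible_hull :: "('a::linordered_ab_group_add \<Rightarrow> 'q::linordered_ab_group_add) \<Rightarrow> bool" where
  "divisible_hull j \<longleftrightarrow> order_embedding j \<and>
     (\<forall>(q::'q) (n::nat). n > 0 \<longrightarrow> (\<exists>p. nsmul n p = q)) \<and>
     (\<forall>q. \<exists>n>0. \<exists>g. nsmul n q = j g)"

definition valsV :: "('k::field \<Rightarrow> 'g::linordered_ab_group_add) \<Rightarrow> ('g \<Rightarrow> 'q::linordered_ab_group_add)
     \<Rightarrow> ('k poly \<Rightarrow> 'q) set" where
  "valsV v jq = {\<mu>. poly_valuation \<mu> \<and> (\<forall>c. c \<noteq> 0 \<longrightarrow> \<mu> [:c:] = jq (v c))}"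

definition mu_minus_inf :: "('k::field \<Rightarrow> 'g) \<Rightarrow> 'k poly \<Rightarrow> int \<times> 'g" where
  "mu_minus_inf v f = (- int (degree f), v (lead_coeff f))"

definition val_group :: "('k::field poly \<Rightarrow> 'b::ab_group_add) \<Rightarrow> 'b set" where
  "val_group w = {w f - w g | f g. f \<noteq> 0 \<and> g \<noteq> 0}"

definition val_equiv :: "('k::field poly \<Rightarrow> 'b::{ab_group_add, linorder})
     \<Rightarrow> ('k poly \<Rightarrow> 'c::{ab_group_add, linorder}) \<Rightarrow> bool" where
  "val_equiv w w' \<longleftrightarrow> (\<exists>j. bij_betw j (val_group w') (val_group w) \<and>
     (\<forall>a\<in>val_group w'. \<forall>b\<in>val_group w'. j (a + b) = j a + j b \<and> (a \<le> b \<longleftrightarrow> j a \<le> j b)) \<and>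
     (\<forall>f. f \<noteq> 0 \<longrightarrow> w f = j (w' f)))"

end

theory Submission
  imports Defs
begin

text \<open>Write \<open>X\<close> for \<open>\<eta>(x)\<close>. All three conditions are equivalent to \<open>X\<close> being infinitely small with
  respect to \<open>\<Gamma>\<close>, i.e. \<open>n X < \<iota>(g)\<close> for all \<open>n > 0\<close> and \<open>g \<in> \<Gamma>\<close>; for (2) this is divisibility of
  \<open>\<Gamma>\<^sub>\<rat>\<close>. If \<open>X\<close> is infinitely small, the leading term of \<open>f\<close> strictly dominates the others, so
  \<open>\<eta>(f) = \<iota>(v(lc f)) + (deg f) X\<close>. Hence \<open>(n, g) \<mapsto> \<iota>(g) - n X\<close> is an isomorphism between the value
  groups of \<open>\<mu>\<^sub>-\<^sub>\<infinity>\<close> and \<open>\<eta>\<close>; and \<open>\<eta>\<close> coincides with the Gauss valuation with \<open>x \<mapsto> X\<close>, which lies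
  below the Gauss valuation with \<open>x \<mapsto> \<mu>(x)\<close>, which lies below any \<open>\<mu> \<in> \<V>\<close>. Conversely, the Gauss
  valuations with \<open>x \<mapsto> \<gamma>\<close> belong to \<open>\<V>\<close>, and an equivalence with \<open>\<mu>\<^sub>-\<^sub>\<infinity>\<close> transports the
  inequalities \<open>\<mu>\<^sub>-\<^sub>\<infinity>(x\<^sup>n) < \<mu>\<^sub>-\<^sub>\<infinity>(c)\<close>.\<close>

section \<open>Multiples and order embeddings\<close>

lemma nsmul_0 [simp]: "nsmul 0 a = 0"
  by (simp add: nsmul_def)

lemma nsmul_Suc [simp]: "nsmul (Suc n) a = a + nsmul n a"
  by (simp add: nsmul_def)

lemma nsmul_zero [simp]: "nsmul n (0::'a::monoid_add) = 0"
  by (induct n) simp_all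

lemma nsmul_add: "nsmul (m + n) (a::'a::monoid_add) = nsmul m a + nsmul n a"
  by (induct m) (simp_all add: add.assoc)

lemma nsmul_mono: "a \<le> b \<Longrightarrow> nsmul n a \<le> nsmul n (b::'a::ordered_ab_group_add)"
  by (induct n) (simp_all add: add_mono)

lemma nsmul_strict_mono: "0 < n \<Longrightarrow> a < b \<Longrightarrow> nsmul n a < nsmul n (b::'a::ordered_ab_group_add)"
proof (induct n)
  case (Suc n)
  then show ?case
    by (cases n) (auto intro: add_less_le_mono nsmul_mono)
qed simp

lemma nsmul_less_cancel: "0 < n \<Longrightarrow> nsmul n a < nsmul n b \<Longrightarrow> a < (b::'a::linordered_ab_group_add)"
  using nsmul_mono[of b a n] by (auto simp: not_less[symmetric])

lemma additive_zero:
  assumes "\<And>a b. f (a + b) = f a + f b"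
  shows "f (0::'a::group_add) = (0::'b::group_add)"
proof -
  have "f 0 + f 0 = f 0 + 0"
    using assms[of 0 0] by simp
  then show ?thesis
    by (rule add_left_imp_eq)
qed

lemma additive_diff:
  assumes "\<And>a b. f (a + b) = f a + f b"
  shows "f (a - b) = f (a::'a::group_add) - (f b::'b::group_add)"
  using assms[of "a - b" b] by (simp add: eq_diff_eq)

lemma additive_nsmul:
  assumes "\<And>a b. f (a + b) = f a + f b"
  shows "f (nsmul n (a::'a::group_add)) = nsmul n (f a::'b::group_add)"
  by (induct n) (simp_all add: assms additive_zero[OF assms])

lemma order_embedding_add: "order_embedding j \<Longrightarrow> j (a + b) = j a + j b"
  by (simp add: order_embedding_def)

lemma order_embedding_le_iff: "order_embedding j \<Longrightarrow> j a \<le> j b \<longleftrightarrow> a \<le> b"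
  by (simp add: order_embedding_def)

lemma order_embedding_less_iff: "order_embedding j \<Longrightarrow> j a < j b \<longleftrightarrow> a < b"
  by (simp add: order_embedding_le_iff less_le_not_le)

lemma order_embedding_eq_iff: "order_embedding j \<Longrightarrow> j a = j b \<longleftrightarrow> a = b"
  by (simp add: order.eq_iff order_embedding_le_iff)

lemma order_embedding_zero: "order_embedding j \<Longrightarrow> j 0 = 0"
  by (rule additive_zero) (rule order_embedding_add)

lemma order_embedding_nsmul: "order_embedding j \<Longrightarrow> j (nsmul n a) = nsmul n (j a)"
  by (rule additive_nsmul) (rule order_embedding_add)

lemma order_embedding_min: "order_embedding j \<Longrightarrow> j (min a b) = min (j a) (j b)"
  by (simp add: min_def order_embedding_le_iff)

lemma order_embedding_comp:
  "order_embedding j \<Longrightarrow> order_embedding k \<Longrightarrow> order_embedding (\<lambda>x. k (j x))"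
  by (simp add: order_embedding_def)

text \<open>Positivity of \<open>q\<close> can be tested on a multiple of \<open>q\<close> lying in the image of \<open>jq\<close>.\<close>
lemma order_embedding_on_divisible_hull:
  assumes hull: "divisible_hull jq"
    and add: "\<And>a b. \<phi> (a + b) = \<phi> a + \<phi> b"
    and ext: "\<And>g. \<phi> (jq g) = \<psi> g"
    and \<psi>: "order_embedding \<psi>"
  shows "order_embedding \<phi>"
proof -
  have jq: "order_embedding jq" using hull by (simp add: divisible_hull_def)
  have pos: "0 < \<phi> q" if "0 < q" for q
  proof -
    obtain n g where n: "0 < n" "nsmul n q = jq g"
      using hull unfolding divisible_hull_def by blast
    have "jq 0 < jq g"
      using nsmul_strict_mono[OF n(1) \<open>0 < q\<close>] n(2) order_embedding_zero[OF jq] by simp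
    then have "\<psi> 0 < \<psi> g"
      by (simp add: order_embedding_less_iff[OF jq] order_embedding_less_iff[OF \<psi>])
    also have "\<psi> g = nsmul n (\<phi> q)"
      using ext[of g] n(2) additive_nsmul[of \<phi>, OF add] by metis
    finally have "nsmul n 0 < nsmul n (\<phi> q)"
      using order_embedding_zero[OF \<psi>] by simp
    then show ?thesis by (rule nsmul_less_cancel[OF n(1)])
  qed
  have "strict_mono \<phi>"
    using pos additive_diff[of \<phi>, OF add] by (intro strict_monoI) (metis diff_gt_0_iff_gt)
  then show ?thesis
    using add by (simp add: order_embedding_def strict_mono_less_eq)
qed

section \<open>Valuations\<close>

definition valuation :: "('a::idom \<Rightarrow> 'b::linordered_ab_group_add) \<Rightarrow> bool" where
  "valuation w \<longleftrightarrow>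
     (\<forall>a b. a \<noteq> 0 \<longrightarrow> b \<noteq> 0 \<longrightarrow> w (a * b) = w a + w b) \<and>
     (\<forall>a b. a \<noteq> 0 \<longrightarrow> b \<noteq> 0 \<longrightarrow> a + b \<noteq> 0 \<longrightarrow> min (w a) (w b) \<le> w (a + b))"

lemma field_valuation_iff_valuation: "field_valuation v \<longleftrightarrow> valuation v"
  by (simp add: field_valuation_def valuation_def)

lemma poly_valuation_iff_valuation:
  "poly_valuation (w::'k::field poly \<Rightarrow> 'b::linordered_ab_group_add) \<longleftrightarrow> valuation w"
  by (simp add: poly_valuation_def valuation_def)

lemma valuation_mult: "valuation w \<Longrightarrow> a \<noteq> 0 \<Longrightarrow> b \<noteq> 0 \<Longrightarrow> w (a * b) = w a + w b"
  by (simp add: valuation_def)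

lemma valuation_add_ge_min:
  "valuation w \<Longrightarrow> a \<noteq> 0 \<Longrightarrow> b \<noteq> 0 \<Longrightarrow> a + b \<noteq> 0 \<Longrightarrow> min (w a) (w b) \<le> w (a + b)"
  by (simp add: valuation_def)

lemma valuation_one: "valuation w \<Longrightarrow> w 1 = 0"
  using valuation_mult[of w 1 1] by simp

lemma valuation_minus: assumes "valuation w" "a \<noteq> 0" shows "w (- a) = w a"
proof -
  have "w (-1) + w (-1) = 0"
    using valuation_mult[OF assms(1), of "-1" "-1"] valuation_one[OF assms(1)] by simp
  then have "w (-1) = 0"
    by (cases "w (-1)" "0::'b" rule: linorder_cases) (auto dest: add_neg_neg add_pos_pos)
  then show ?thesis
    using valuation_mult[OF assms(1), of "-1" a] assms(2) by simp
qed

lemma valuation_power: "valuation w \<Longrightarrow> a \<noteq> 0 \<Longrightarrow> w (a ^ n) = nsmul n (w a)"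
  by (induct n) (simp_all add: valuation_one valuation_mult)

lemma valuation_divide:
  "valuation w \<Longrightarrow> a \<noteq> 0 \<Longrightarrow> b \<noteq> 0 \<Longrightarrow> w (a / b) = w a - w (b::'a::field)"
  using valuation_mult[of w "a / b" b] by (simp add: eq_diff_eq)

lemma valuation_comp: "valuation w \<Longrightarrow> order_embedding j \<Longrightarrow> valuation (\<lambda>x. j (w x))"
  by (simp add: valuation_def order_embedding_add order_embedding_min[symmetric]
      order_embedding_le_iff)

lemma valuation_add_eq_left:
  assumes w: "valuation w" and a: "a \<noteq> 0" and b: "b \<noteq> 0" and less: "w a < w b"
  shows "a + b \<noteq> 0" and "w (a + b) = w a"
proof -
  show ab: "a + b \<noteq> 0"
    using valuation_minus[OF w b] less by (auto simp: add_eq_0_iff)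
  have "min (w a) (w b) \<le> w (a + b)"
    by (rule valuation_add_ge_min[OF w a b ab])
  moreover have "min (w (a + b)) (w (- b)) \<le> w a"
    using valuation_add_ge_min[OF w ab, of "- b"] a b by simp
  ultimately show "w (a + b) = w a"
    using less valuation_minus[OF w b] by (auto simp: min_def split: if_splits)
qed

lemma valuation_sum_upward_closed:
  assumes w: "valuation w" and fin: "finite S"
    and up: "\<And>x y. P x \<Longrightarrow> x \<le> y \<Longrightarrow> P y"
    and terms: "\<And>i. i \<in> S \<Longrightarrow> a i \<noteq> 0 \<Longrightarrow> P (w (a i))"
    and nz: "sum a S \<noteq> 0"
  shows "P (w (sum a S))"
  using fin terms nz
proof (induct S rule: finite_induct)
  case (insert x F)
  show ?case
  proof (cases "a x = 0 \<or> sum a F = 0")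
    case True
    then show ?thesis using insert by auto
  next
    case False
    then have "min (w (a x)) (w (sum a F)) \<le> w (sum a (insert x F))"
      using valuation_add_ge_min[OF w] insert by simp
    moreover have "P (w (a x))" "P (w (sum a F))"
      using insert False by auto
    ultimately show ?thesis
      using up by (metis min_def)
  qed
qed simp

lemma valuation_add_sum_eq_left:
  assumes w: "valuation w" and fin: "finite S" and a0: "a0 \<noteq> 0"
    and terms: "\<And>i. i \<in> S \<Longrightarrow> a i \<noteq> 0 \<Longrightarrow> w a0 < w (a i)"
  shows "a0 + sum a S \<noteq> 0" and "w (a0 + sum a S) = w a0"
proof (atomize (full), cases "sum a S = 0")
  case False
  have "w a0 < w (sum a S)"
    by (rule valuation_sum_upward_closed[OF w fin, where P="\<lambda>x. w a0 < x"])
      (use terms False in auto)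
  then show "a0 + sum a S \<noteq> 0 \<and> w (a0 + sum a S) = w a0"
    using valuation_add_eq_left[OF w a0 False] by simp
qed (use a0 in simp)

section \<open>Gauss valuations\<close>

definition gauss_term :: "('a::zero \<Rightarrow> 'b::monoid_add) \<Rightarrow> 'b \<Rightarrow> 'a poly \<Rightarrow> nat \<Rightarrow> 'b" where
  "gauss_term w \<delta> f i = w (coeff f i) + nsmul i \<delta>"

definition gauss_val :: "('a::zero \<Rightarrow> 'b::linordered_ab_group_add) \<Rightarrow> 'b \<Rightarrow> 'a poly \<Rightarrow> 'b" where
  "gauss_val w \<delta> f = Min (gauss_term w \<delta> f ` {i. coeff f i \<noteq> 0})"

lemma finite_coeff_support: "finite {i. coeff f i \<noteq> 0}"
  by (rule finite_subset[of _ "{..degree f}"]) (auto intro: le_degree)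

lemma gauss_val_le: "coeff f i \<noteq> 0 \<Longrightarrow> gauss_val w \<delta> f \<le> gauss_term w \<delta> f i"
  unfolding gauss_val_def by (rule Min_le) (use finite_coeff_support in auto)

lemma gauss_val_attained:
  assumes "f \<noteq> 0"
  obtains i where "coeff f i \<noteq> 0" "gauss_val w \<delta> f = gauss_term w \<delta> f i"
proof -
  have "{i. coeff f i \<noteq> 0} \<noteq> {}"
    using assms leading_coeff_0_iff by blast
  then have "gauss_val w \<delta> f \<in> gauss_term w \<delta> f ` {i. coeff f i \<noteq> 0}"
    unfolding gauss_val_def by (intro Min_in) (simp_all add: finite_coeff_support)
  then show ?thesis
    using that by auto
qed

lemma gauss_val_greatest:
  "f \<noteq> 0 \<Longrightarrow> (\<And>i. coeff f i \<noteq> 0 \<Longrightarrow> m \<le> gauss_term w \<delta> f i) \<Longrightarrow> m \<le> gauss_val w \<delta> f"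
  by (metis gauss_val_attained)

lemma gauss_val_attained_least:
  assumes "f \<noteq> 0"
  obtains i where "coeff f i \<noteq> 0" "gauss_val w \<delta> f = gauss_term w \<delta> f i"
    "\<And>j. j < i \<Longrightarrow> coeff f j \<noteq> 0 \<Longrightarrow> gauss_val w \<delta> f < gauss_term w \<delta> f j"
proof -
  define P where "P i \<longleftrightarrow> coeff f i \<noteq> 0 \<and> gauss_val w \<delta> f = gauss_term w \<delta> f i" for i
  have "P (LEAST i. P i)"
    by (rule LeastI_ex) (metis P_def gauss_val_attained[OF assms])
  moreover have "gauss_val w \<delta> f < gauss_term w \<delta> f j"
    if "j < (LEAST i. P i)" "coeff f j \<noteq> 0" for j
    using not_less_Least[OF that(1)] gauss_val_le[OF that(2)] that(2)
    by (auto simp: P_def order.order_iff_strict)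
  ultimately show ?thesis
    using that by (auto simp: P_def)
qed

lemma gauss_term_mult:
  assumes "valuation w" "coeff f i \<noteq> 0" "coeff g j \<noteq> 0"
  shows "w (coeff f i * coeff g j) + nsmul (i + j) \<delta> = gauss_term w \<delta> f i + gauss_term w \<delta> g j"
  using assms by (simp add: valuation_mult gauss_term_def nsmul_add algebra_simps)

lemma gauss_val_mult_ge:
  assumes w: "valuation w" and f: "f \<noteq> 0" and g: "g \<noteq> 0"
  shows "gauss_val w \<delta> f + gauss_val w \<delta> g \<le> gauss_val w \<delta> (f * g)"
proof (rule gauss_val_greatest)
  fix k assume nz: "coeff (f * g) k \<noteq> 0"
  let ?m = "gauss_val w \<delta> f + gauss_val w \<delta> g - nsmul k \<delta>"
  have "?m \<le> w (\<Sum>i\<le>k. coeff f i * coeff g (k - i))"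
  proof (rule valuation_sum_upward_closed[OF w])
    fix i assume i: "i \<in> {..k}" "coeff f i * coeff g (k - i) \<noteq> 0"
    then have "w (coeff f i * coeff g (k - i)) + nsmul k \<delta>
        = gauss_term w \<delta> f i + gauss_term w \<delta> g (k - i)"
      using gauss_term_mult[OF w, of f i g "k - i"] by simp
    moreover have "gauss_val w \<delta> f \<le> gauss_term w \<delta> f i" "gauss_val w \<delta> g \<le> gauss_term w \<delta> g (k - i)"
      using i by (auto intro: gauss_val_le)
    ultimately show "?m \<le> w (coeff f i * coeff g (k - i))"
      by (simp add: diff_le_eq add_mono)
  qed (use nz in \<open>auto simp: coeff_mult\<close>)
  then show "gauss_val w \<delta> f + gauss_val w \<delta> g \<le> gauss_term w \<delta> (f * g) k"
    by (simp add: gauss_term_def coeff_mult diff_le_eq)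
qed (use f g in simp)

text \<open>The reverse inequality is witnessed by the coefficient of index \<open>i0 + j0\<close>, where \<open>i0\<close> and
  \<open>j0\<close> are the least indices at which the minima for \<open>f\<close> and \<open>g\<close> are attained: in it the
  product of the two minimal terms strictly dominates all other summands.\<close>
lemma gauss_val_mult:
  assumes w: "valuation w" and f: "f \<noteq> 0" and g: "g \<noteq> 0"
  shows "gauss_val w \<delta> (f * g) = gauss_val w \<delta> f + gauss_val w \<delta> g"
proof -
  let ?F = "gauss_val w \<delta> f" and ?G = "gauss_val w \<delta> g"
  obtain i0 where i0: "coeff f i0 \<noteq> 0" "?F = gauss_term w \<delta> f i0"
    and i0_least: "\<And>i. i < i0 \<Longrightarrow> coeff f i \<noteq> 0 \<Longrightarrow> ?F < gauss_term w \<delta> f i"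
    using gauss_val_attained_least[OF f] by metis
  obtain j0 where j0: "coeff g j0 \<noteq> 0" "?G = gauss_term w \<delta> g j0"
    and j0_least: "\<And>j. j < j0 \<Longrightarrow> coeff g j \<noteq> 0 \<Longrightarrow> ?G < gauss_term w \<delta> g j"
    using gauss_val_attained_least[OF g] by metis
  define k where "k = i0 + j0"
  define t where "t i = coeff f i * coeff g (k - i)" for i
  have t_i0: "t i0 \<noteq> 0" "w (t i0) + nsmul k \<delta> = ?F + ?G"
    using i0 j0 gauss_term_mult[OF w i0(1) j0(1)] by (simp_all add: t_def k_def)
  have coeff_k: "coeff (f * g) k = t i0 + sum t ({..k} - {i0})"
    unfolding coeff_mult t_def by (rule sum.remove) (auto simp: k_def)
  have dominated: "w (t i0) < w (t i)" if i: "i \<in> {..k} - {i0}" "t i \<noteq> 0" for i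
  proof -
    have fi: "coeff f i \<noteq> 0" and gi: "coeff g (k - i) \<noteq> 0"
      using i(2) by (auto simp: t_def)
    have "?F + ?G < gauss_term w \<delta> f i + gauss_term w \<delta> g (k - i)"
    proof (cases "i < i0")
      case True
      show ?thesis
        using i0_least[OF True fi] gauss_val_le[OF gi, of w \<delta>] by (rule add_less_le_mono)
    next
      case False
      then have "k - i < j0"
        using i by (auto simp: k_def)
      then show ?thesis
        using gauss_val_le[OF fi] j0_least[OF _ gi] by (metis add_le_less_mono)
    qed
    moreover have "w (t i) + nsmul k \<delta> = gauss_term w \<delta> f i + gauss_term w \<delta> g (k - i)"
      using gauss_term_mult[OF w fi gi, of \<delta>] i(1) by (simp add: t_def)
    ultimately have "w (t i0) + nsmul k \<delta> < w (t i) + nsmul k \<delta>"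
      using t_i0(2) by simp
    then show ?thesis
      by simp
  qed
  have "coeff (f * g) k \<noteq> 0" "w (coeff (f * g) k) = w (t i0)"
    unfolding coeff_k by (rule valuation_add_sum_eq_left[OF w _ t_i0(1) dominated]; simp)+
  then have "gauss_val w \<delta> (f * g) \<le> ?F + ?G"
    using gauss_val_le[of "f * g" k w \<delta>] t_i0(2) by (simp add: gauss_term_def)
  then show ?thesis
    using gauss_val_mult_ge[OF w f g, of \<delta>] by simp
qed

lemma gauss_val_add_ge_min:
  assumes w: "valuation w" and fg: "f + g \<noteq> 0"
  shows "min (gauss_val w \<delta> f) (gauss_val w \<delta> g) \<le> gauss_val w \<delta> (f + g)"
proof (rule gauss_val_greatest[OF fg])
  fix k assume k: "coeff (f + g) k \<noteq> 0"
  show "min (gauss_val w \<delta> f) (gauss_val w \<delta> g) \<le> gauss_term w \<delta> (f + g) k"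
  proof (cases "coeff f k = 0 \<or> coeff g k = 0")
    case True
    then show ?thesis
      using k gauss_val_le[of f k w \<delta>] gauss_val_le[of g k w \<delta>]
      by (auto simp: gauss_term_def min.coboundedI1 min.coboundedI2)
  next
    case False
    then have "min (w (coeff f k)) (w (coeff g k)) \<le> w (coeff (f + g) k)"
      using valuation_add_ge_min[OF w] k by simp
    then have "min (gauss_term w \<delta> f k) (gauss_term w \<delta> g k) \<le> gauss_term w \<delta> (f + g) k"
      by (auto simp: gauss_term_def min_def split: if_splits)
    moreover have "gauss_val w \<delta> f \<le> gauss_term w \<delta> f k" "gauss_val w \<delta> g \<le> gauss_term w \<delta> g k"
      using False by (auto intro: gauss_val_le)
    ultimately show ?thesis
      by (meson min.mono order_trans)
  qed
qed

lemma valuation_gauss_val: "valuation w \<Longrightarrow> valuation (gauss_val w \<delta>)"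
  unfolding valuation_def[of "gauss_val w \<delta>"] using gauss_val_mult gauss_val_add_ge_min by blast

lemma gauss_val_const: "c \<noteq> 0 \<Longrightarrow> gauss_val w \<delta> [:c:] = w c"
proof -
  assume "c \<noteq> 0"
  then have "coeff [:c:] i \<noteq> 0 \<longleftrightarrow> i = 0" for i
    by (cases i) auto
  then have "{i. coeff [:c:] i \<noteq> 0} = {0}"
    by auto
  then show ?thesis
    by (simp add: gauss_val_def gauss_term_def)
qed

lemma gauss_val_X:
  fixes w :: "'a::idom \<Rightarrow> 'b::linordered_ab_group_add"
  shows "valuation w \<Longrightarrow> gauss_val w \<delta> [:0, 1:] = \<delta>"
proof -
  assume w: "valuation w"
  have "coeff [:0, 1::'a:] i \<noteq> 0 \<longleftrightarrow> i = 1" for i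
    by (cases i; cases "i - 1") auto
  then have "{i. coeff [:0, 1::'a:] i \<noteq> 0} = {1}"
    by auto
  then show ?thesis
    by (simp add: gauss_val_def gauss_term_def valuation_one[OF w])
qed

lemma gauss_val_mono: "\<delta> \<le> \<delta>' \<Longrightarrow> gauss_val w \<delta> f \<le> gauss_val w \<delta>' f"
proof (cases "f = 0")
  case False
  assume "\<delta> \<le> \<delta>'"
  then have "gauss_term w \<delta> f i \<le> gauss_term w \<delta>' f i" for i
    by (simp add: gauss_term_def nsmul_mono)
  then show ?thesis
    using False by (meson gauss_val_greatest gauss_val_le order_trans)
qed (simp add: gauss_val_def)

lemma gauss_val_le_valuation:
  assumes \<mu>: "valuation \<mu>" and const: "\<And>c. c \<noteq> 0 \<Longrightarrow> \<mu> [:c:] = w c" and f: "f \<noteq> 0"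
  shows "gauss_val w (\<mu> [:0, 1:]) f \<le> \<mu> f"
proof -
  have monom: "\<mu> (monom c i) = gauss_term w (\<mu> [:0, 1:]) f i" if "c = coeff f i" "c \<noteq> 0" for c i
  proof -
    have "\<mu> ([:c:] * [:0, 1:] ^ i) = \<mu> [:c:] + \<mu> ([:0, 1:] ^ i)"
      by (rule valuation_mult[OF \<mu>]) (use that in auto)
    then show ?thesis
      using that by (simp add: monom_altdef valuation_power[OF \<mu>] const gauss_term_def)
  qed
  have "gauss_val w (\<mu> [:0, 1:]) f \<le> \<mu> (\<Sum>i\<le>degree f. monom (coeff f i) i)"
    by (rule valuation_sum_upward_closed[OF \<mu>])
      (use f monom gauss_val_le in \<open>auto simp: poly_as_sum_of_monoms\<close>)
  then show ?thesis
    by (simp add: poly_as_sum_of_monoms)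
qed

section \<open>Infinitely small values of \<open>x\<close>\<close>

definition infinitely_below :: "'a::ordered_ab_group_add \<Rightarrow> 'a set \<Rightarrow> bool" where
  "infinitely_below \<delta> S \<longleftrightarrow> (\<forall>n>0. \<forall>s\<in>S. nsmul n \<delta> < s)"

lemma infinitely_below_image_iff:
  "order_embedding j \<Longrightarrow> infinitely_below (j \<delta>) (j ` S) \<longleftrightarrow> infinitely_below \<delta> S"
  by (simp add: infinitely_below_def order_embedding_nsmul[symmetric] order_embedding_less_iff)

lemma valuation_eq_lead_term:
  fixes \<mu> :: "'k::field poly \<Rightarrow> 'b::linordered_ab_group_add"
  assumes \<mu>: "valuation \<mu>" and w: "valuation w" and const: "\<And>c. c \<noteq> 0 \<Longrightarrow> \<mu> [:c:] = w c"
    and below: "infinitely_below (\<mu> [:0, 1:]) (w ` {c. c \<noteq> 0})"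
  shows "f \<noteq> 0 \<Longrightarrow> \<mu> f = w (lead_coeff f) + nsmul (degree f) (\<mu> [:0, 1:])"
proof (induct f rule: pCons_induct)
  case (pCons a p)
  let ?\<delta> = "\<mu> [:0, 1:]"
  show ?case
  proof (cases "p = 0")
    case True
    then show ?thesis
      using pCons.prems const by simp
  next
    case p: False
    have "\<mu> ([:0, 1:] * p) = ?\<delta> + \<mu> p"
      using p by (intro valuation_mult[OF \<mu>]) simp_all
    also have "\<dots> = w (lead_coeff p) + nsmul (Suc (degree p)) ?\<delta>"
      using pCons.hyps(2) p by (simp add: algebra_simps)
    finally have Xp: "\<mu> ([:0, 1:] * p) = w (lead_coeff (pCons a p)) + nsmul (degree (pCons a p)) ?\<delta>"
      using p by simp
    have "\<mu> (pCons a p) = \<mu> ([:0, 1:] * p)"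
    proof (cases "a = 0")
      case a: False
      have "nsmul (Suc (degree p)) ?\<delta> < w (a / lead_coeff p)"
        using below a p by (simp add: infinitely_below_def del: nsmul_Suc)
      then have less: "\<mu> ([:0, 1:] * p) < \<mu> [:a:]"
        using Xp a p const[OF a] by (simp add: valuation_divide[OF w] less_diff_eq add.commute
            del: nsmul_Suc)
      have "\<mu> (pCons a p) = \<mu> ([:0, 1:] * p + [:a:])"
        by simp
      also have "\<dots> = \<mu> ([:0, 1:] * p)"
        by (rule valuation_add_eq_left(2)[OF \<mu> _ _ less]) (use a p in simp_all)
      finally show ?thesis .
    qed simp
    then show ?thesis
      using Xp by (rule trans)
  qed
qed simp

definition zsmul :: "int \<Rightarrow> 'a::ab_group_add \<Rightarrow> 'a" where
  "zsmul n a = nsmul (nat n) a - nsmul (nat (- n)) a"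

lemma zsmul_0 [simp]: "zsmul 0 a = 0"
  by (simp add: zsmul_def)

lemma zsmul_of_nat [simp]: "zsmul (int n) a = nsmul n a"
  by (simp add: zsmul_def)

lemma zsmul_minus_of_nat [simp]: "zsmul (- int n) a = - nsmul n a"
  by (simp add: zsmul_def)

lemma zsmul_diff_of_nat: "zsmul (int m - int n) a = nsmul m a - nsmul n a"
proof (cases "n \<le> m")
  case True
  then have "int m - int n = int (m - n)"
    by simp
  then have "zsmul (int m - int n) a = nsmul (m - n) a"
    by (simp only: zsmul_of_nat)
  then show ?thesis
    using nsmul_add[of "m - n" n a] True by simp
next
  case False
  then have "int m - int n = - int (n - m)"
    by simp
  then have "zsmul (int m - int n) a = - nsmul (n - m) a"
    by (simp only: zsmul_minus_of_nat)
  then show ?thesis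
    using nsmul_add[of "n - m" m a] False by simp
qed

lemma zsmul_add: "zsmul (m + n) a = zsmul m a + zsmul n a"
proof -
  have "zsmul (m + n) a = zsmul (int (nat m + nat n) - int (nat (- m) + nat (- n))) a"
    by (rule arg_cong[where f="\<lambda>k. zsmul k a"]) simp
  also have "\<dots> = nsmul (nat m + nat n) a - nsmul (nat (- m) + nat (- n)) a"
    by (rule zsmul_diff_of_nat)
  finally have "zsmul (m + n) a = nsmul (nat m + nat n) a - nsmul (nat (- m) + nat (- n)) a" .
  then show ?thesis
    by (simp add: zsmul_def nsmul_add del: nsmul_Suc)
qed


lemma val_equiv_if_strict_mono_additive:
  fixes J :: "'c::{ab_group_add, linorder} \<Rightarrow> 'b::{ab_group_add, linorder}"
    and w :: "'k::field poly \<Rightarrow> 'b" and w' :: "'k poly \<Rightarrow> 'c"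
  assumes add: "\<And>a b. J (a + b) = J a + J b" and mono: "strict_mono J"
    and comp: "\<And>f. f \<noteq> 0 \<Longrightarrow> w f = J (w' f)"
  shows "val_equiv w w'"
proof -
  have J_diff: "J (w' f - w' g) = w f - w g" if "f \<noteq> 0" "g \<noteq> 0" for f g
    using that by (simp add: comp additive_diff[of J, OF add])
  have "J ` val_group w' = val_group w"
  proof
    show "J ` val_group w' \<subseteq> val_group w"
      unfolding val_group_def using J_diff by auto
    show "val_group w \<subseteq> J ` val_group w'"
    proof
      fix x assume "x \<in> val_group w"
      then obtain f g where "x = w f - w g" "f \<noteq> 0" "g \<noteq> 0"
        unfolding val_group_def by blast
      then have "x = J (w' f - w' g)" "w' f - w' g \<in> val_group w'"
        using J_diff unfolding val_group_def by auto
      then show "x \<in> J ` val_group w'"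
        by blast
    qed
  qed
  then have "bij_betw J (val_group w') (val_group w)"
    using strict_mono_imp_inj_on[OF mono] by (simp add: bij_betw_def)
  moreover have "\<forall>a\<in>val_group w'. \<forall>b\<in>val_group w'. J (a + b) = J a + J b \<and> (a \<le> b \<longleftrightarrow> J a \<le> J b)"
    using add strict_mono_less_eq[OF mono] by simp
  ultimately show ?thesis
    unfolding val_equiv_def using comp by blast
qed

lemma mu_minus_inf_const: "c \<noteq> 0 \<Longrightarrow> mu_minus_inf v [:c:] = (0, v c)"
  by (simp add: mu_minus_inf_def)

lemma mu_minus_inf_X_power:
  fixes v :: "'k::field \<Rightarrow> 'g::linordered_ab_group_add"
  shows "valuation v \<Longrightarrow> mu_minus_inf v ([:0, 1:] ^ k) = (- int k, 0)"
  using coeff_linear_power[of "0::'k" k] by (simp add: mu_minus_inf_def degree_power_eq valuation_one)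

lemma mu_minus_inf_in_val_group:
  "valuation v \<Longrightarrow> f \<noteq> 0 \<Longrightarrow> mu_minus_inf v f \<in> val_group (mu_minus_inf v)"
  unfolding val_group_def
  by (rule CollectI, rule exI[of _ f], rule exI[of _ 1]) (simp add: mu_minus_inf_def valuation_one)

section \<open>Valuations extending \<open>v\<close>\<close>

locale valuation_extension =
  fixes v :: "'k::field \<Rightarrow> 'g::linordered_ab_group_add"
    and \<iota> :: "'g \<Rightarrow> 'h::linordered_ab_group_add"
    and jq :: "'g \<Rightarrow> 'q::linordered_ab_group_add"
    and jr :: "'h \<Rightarrow> 'r::linordered_ab_group_add"
    and \<iota>Q :: "'q \<Rightarrow> 'r"
    and \<eta> :: "'k poly \<Rightarrow> 'h"
  assumes v_val: "field_valuation v"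
    and v_onto: "\<forall>g. \<exists>a. a \<noteq> 0 \<and> v a = g"
    and v_nontriv: "\<exists>a. a \<noteq> 0 \<and> v a \<noteq> 0"
    and \<iota>_emb: "order_embedding \<iota>"
    and jq_hull: "divisible_hull jq"
    and jr_hull: "divisible_hull jr"
    and \<iota>Q_hom: "\<forall>a b. \<iota>Q (a + b) = \<iota>Q a + \<iota>Q b"
    and \<iota>Q_ext: "\<forall>g. \<iota>Q (jq g) = jr (\<iota> g)"
    and \<eta>_val: "poly_valuation \<eta>"
    and \<eta>_ext: "\<forall>c. c \<noteq> 0 \<longrightarrow> \<eta> [:c:] = \<iota> (v c)"
begin

lemma v_valuation: "valuation v"
  using v_val by (simp add: field_valuation_iff_valuation)

lemma \<eta>_valuation: "valuation \<eta>"
  using \<eta>_val by (simp add: poly_valuation_iff_valuation)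

lemma jq_emb: "order_embedding jq"
  using jq_hull by (simp add: divisible_hull_def)

lemma jr_emb: "order_embedding jr"
  using jr_hull by (simp add: divisible_hull_def)

lemma \<iota>Q_emb: "order_embedding \<iota>Q"
  by (rule order_embedding_on_divisible_hull[OF jq_hull _ _ order_embedding_comp[OF \<iota>_emb jr_emb]])
    (simp_all add: \<iota>Q_hom \<iota>Q_ext)

lemma less_hull_iff_infinitely_below: "(\<forall>\<gamma>. jr x < \<iota>Q \<gamma>) \<longleftrightarrow> infinitely_below x (range \<iota>)"
proof
  assume less: "\<forall>\<gamma>. jr x < \<iota>Q \<gamma>"
  show "infinitely_below x (range \<iota>)"
    unfolding infinitely_below_def
  proof (intro allI impI ballI)
    fix n :: nat and y assume n: "0 < n" and "y \<in> range \<iota>"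
    then obtain g where y: "y = \<iota> g" by blast
    obtain q where q: "nsmul n q = jq g"
      using jq_hull n unfolding divisible_hull_def by blast
    have "jr (nsmul n x) = nsmul n (jr x)"
      by (rule order_embedding_nsmul[OF jr_emb])
    also have "\<dots> < nsmul n (\<iota>Q q)"
      using less n by (simp add: nsmul_strict_mono)
    also have "\<dots> = jr (\<iota> g)"
      using q \<iota>Q_ext order_embedding_nsmul[OF \<iota>Q_emb] by metis
    finally show "nsmul n x < y"
      using y by (simp add: order_embedding_less_iff[OF jr_emb])
  qed
next
  assume below: "infinitely_below x (range \<iota>)"
  show "\<forall>\<gamma>. jr x < \<iota>Q \<gamma>"
  proof
    fix \<gamma>
    obtain n g where n: "0 < n" "nsmul n \<gamma> = jq g"
      using jq_hull unfolding divisible_hull_def by blast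
    have "nsmul n (jr x) = jr (nsmul n x)"
      by (rule order_embedding_nsmul[OF jr_emb, symmetric])
    also have "\<dots> < jr (\<iota> g)"
      using below n(1) by (simp add: infinitely_below_def order_embedding_less_iff[OF jr_emb])
    also have "\<dots> = nsmul n (\<iota>Q \<gamma>)"
      using n(2) \<iota>Q_ext order_embedding_nsmul[OF \<iota>Q_emb] by metis
    finally show "jr x < \<iota>Q \<gamma>"
      by (rule nsmul_less_cancel[OF n(1)])
  qed
qed

lemma \<eta>_eq_lead_term:
  assumes "infinitely_below (\<eta> [:0, 1:]) (range \<iota>)" and "f \<noteq> 0"
  shows "\<eta> f = \<iota> (v (lead_coeff f)) + nsmul (degree f) (\<eta> [:0, 1:])"
proof (rule valuation_eq_lead_term[OF \<eta>_valuation valuation_comp[OF v_valuation \<iota>_emb] _ _ assms(2)])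
  show "infinitely_below (\<eta> [:0, 1:]) ((\<lambda>c. \<iota> (v c)) ` {c. c \<noteq> 0})"
    using assms(1) by (auto simp: infinitely_below_def)
qed (simp add: \<eta>_ext)

lemma le_valsV_if_less_hull:
  assumes less: "\<forall>\<gamma>. jr (\<eta> [:0, 1:]) < \<iota>Q \<gamma>" and \<mu>: "\<mu> \<in> valsV v jq" and f: "f \<noteq> 0"
  shows "jr (\<eta> f) \<le> \<iota>Q (\<mu> f)"
proof -
  define w where "w c = jr (\<iota> (v c))" for c
  define \<delta> where "\<delta> = jr (\<eta> [:0, 1:])"
  have w: "valuation w"
    unfolding w_def by (intro valuation_comp[OF _ jr_emb] valuation_comp[OF v_valuation \<iota>_emb])
  have "infinitely_below (jr (\<eta> [:0, 1:])) (jr ` range \<iota>)"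
    using less less_hull_iff_infinitely_below infinitely_below_image_iff[OF jr_emb] by blast
  then have below: "infinitely_below \<delta> (w ` {c. c \<noteq> 0})"
    by (auto simp: infinitely_below_def w_def \<delta>_def)
  have \<mu>_val: "valuation (\<lambda>p. \<iota>Q (\<mu> p))" and \<mu>_const: "\<And>c. c \<noteq> 0 \<Longrightarrow> \<iota>Q (\<mu> [:c:]) = w c"
    using \<mu> valuation_comp[OF _ \<iota>Q_emb] \<iota>Q_ext
    by (auto simp: valsV_def poly_valuation_iff_valuation w_def)
  have "jr (\<eta> f) = w (lead_coeff f) + nsmul (degree f) \<delta>"
    using valuation_eq_lead_term[OF valuation_comp[OF \<eta>_valuation jr_emb] w _ _ f] below \<eta>_ext
    by (simp add: w_def \<delta>_def)
  also have "\<dots> = gauss_val w \<delta> f"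
    using valuation_eq_lead_term[OF valuation_gauss_val[OF w] w _ _ f] below
    by (simp add: gauss_val_const gauss_val_X[OF w])
  also have "\<dots> \<le> gauss_val w (\<iota>Q (\<mu> [:0, 1:])) f"
    using less by (simp add: gauss_val_mono less_imp_le \<delta>_def)
  also have "\<dots> \<le> \<iota>Q (\<mu> f)"
    by (rule gauss_val_le_valuation[OF \<mu>_val \<mu>_const f])
  finally show ?thesis .
qed

text \<open>The Gauss valuation with \<open>x \<mapsto> \<gamma> - \<epsilon>\<close> lies in \<open>\<V>\<close>, so \<open>\<eta>(x) \<le> \<gamma> - \<epsilon> < \<gamma>\<close>;
  a positive \<open>\<epsilon>\<close> exists because \<open>v\<close> is non-trivial.\<close>
lemma less_hull_if_le_valsV:
  assumes le: "\<forall>\<mu>\<in>valsV v jq. \<forall>f. f \<noteq> 0 \<longrightarrow> jr (\<eta> f) \<le> \<iota>Q (\<mu> f)"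
  shows "jr (\<eta> [:0, 1:]) < \<iota>Q \<gamma>"
proof -
  obtain a where a: "a \<noteq> 0" "v a \<noteq> 0"
    using v_nontriv by blast
  then have nz: "jq (v a) \<noteq> 0"
    using order_embedding_eq_iff[OF jq_emb, of "v a" 0] order_embedding_zero[OF jq_emb] by simp
  obtain \<epsilon> :: 'q where \<epsilon>: "0 < \<epsilon>"
  proof (cases "0 < jq (v a)")
    case False
    then show ?thesis
      using that[of "- jq (v a)"] nz by simp
  qed
  define w where "w c = jq (v c)" for c
  have w: "valuation w"
    unfolding w_def by (rule valuation_comp[OF v_valuation jq_emb])
  have "gauss_val w (\<gamma> - \<epsilon>) \<in> valsV v jq"
    using valuation_gauss_val[OF w] by (simp add: valsV_def poly_valuation_iff_valuation
        gauss_val_const w_def)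
  then have "jr (\<eta> [:0, 1:]) \<le> \<iota>Q (gauss_val w (\<gamma> - \<epsilon>) [:0, 1:])"
    using le by simp
  also have "\<dots> = \<iota>Q (\<gamma> - \<epsilon>)"
    by (simp add: gauss_val_X[OF w])
  also have "\<dots> < \<iota>Q \<gamma>"
    using \<epsilon> by (simp add: order_embedding_less_iff[OF \<iota>Q_emb])
  finally show ?thesis .
qed

lemma val_equiv_if_infinitely_below:
  assumes below: "infinitely_below (\<eta> [:0, 1:]) (range \<iota>)"
  shows "val_equiv \<eta> (mu_minus_inf v)"
proof -
  define J where "J p = \<iota> (snd p) - zsmul (fst p) (\<eta> [:0, 1:])" for p :: "int \<times> 'g"
  have add: "J (a + b) = J a + J b" for a b
    by (simp add: J_def order_embedding_add[OF \<iota>_emb] zsmul_add)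
  have pos: "0 < J p" if "0 < p" for p
  proof (cases "0 < fst p")
    case True
    then obtain n where n: "fst p = int n" "0 < n"
      by (metis zero_less_imp_eq_int of_nat_0_less_iff)
    then show ?thesis
      using below by (simp add: J_def infinitely_below_def)
  next
    case False
    then have "fst p = 0" "0 < snd p"
      using that by (auto simp: less_prod_def')
    then show ?thesis
      using order_embedding_less_iff[OF \<iota>_emb, of 0 "snd p"] order_embedding_zero[OF \<iota>_emb]
      by (simp add: J_def)
  qed
  have "strict_mono J"
  proof (rule strict_monoI)
    fix a b :: "int \<times> 'g" assume "a < b"
    then have "0 < b - a"
      by (auto simp: less_prod_def' zero_prod_def)
    then have "0 < J (b - a)"
      by (rule pos)
    then show "J a < J b"
      by (simp add: additive_diff[of J, OF add])
  qed
  moreover have "\<eta> f = J (mu_minus_inf v f)" if "f \<noteq> 0" for f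
    using \<eta>_eq_lead_term[OF below that] by (simp add: J_def mu_minus_inf_def)
  ultimately show ?thesis
    using add val_equiv_if_strict_mono_additive by blast
qed

lemma infinitely_below_if_val_equiv:
  assumes "val_equiv \<eta> (mu_minus_inf v)"
  shows "infinitely_below (\<eta> [:0, 1:]) (range \<iota>)"
  unfolding infinitely_below_def
proof (intro allI impI ballI)
  fix k :: nat and y assume k: "0 < k" and "y \<in> range \<iota>"
  then obtain g where g: "y = \<iota> g"
    by blast
  obtain c where "c \<noteq> 0" "v c = g"
    using v_onto by blast
  with g have c: "c \<noteq> 0" "y = \<iota> (v c)"
    by simp_all
  obtain j where
    j_mono: "\<forall>a\<in>val_group (mu_minus_inf v). \<forall>b\<in>val_group (mu_minus_inf v). a \<le> b \<longleftrightarrow> j a \<le> j b"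
    and j_comp: "\<forall>f. f \<noteq> 0 \<longrightarrow> \<eta> f = j (mu_minus_inf v f)"
    using assms unfolding val_equiv_def by blast
  have X_power: "mu_minus_inf v ([:0, 1:] ^ k) = (- int k, 0)" "[:0, 1::'k:] ^ k \<noteq> 0"
    using mu_minus_inf_X_power[OF v_valuation] by simp_all
  have "\<not> mu_minus_inf v [:c:] \<le> mu_minus_inf v ([:0, 1:] ^ k)"
    using k c X_power by (simp add: mu_minus_inf_const)
  moreover have "mu_minus_inf v [:c:] \<le> mu_minus_inf v ([:0, 1:] ^ k)
      \<longleftrightarrow> \<eta> [:c:] \<le> \<eta> ([:0, 1:] ^ k)"
    using j_mono[rule_format, OF mu_minus_inf_in_val_group[OF v_valuation]
        mu_minus_inf_in_val_group[OF v_valuation]] j_comp c(1) X_power(2) by simp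
  ultimately have "\<not> \<eta> [:c:] \<le> \<eta> ([:0, 1:] ^ k)"
    by simp
  then show "nsmul k (\<eta> [:0, 1:]) < y"
    using c \<eta>_ext by (simp add: valuation_power[OF \<eta>_valuation])
qed

end

theorem mainTheorem1:
  fixes v :: "'k::field \<Rightarrow> 'g::linordered_ab_group_add"
    and \<iota> :: "'g \<Rightarrow> 'h::linordered_ab_group_add"
    and jq :: "'g \<Rightarrow> 'q::linordered_ab_group_add"
    and jr :: "'h \<Rightarrow> 'r::linordered_ab_group_add"
    and \<iota>Q :: "'q \<Rightarrow> 'r"
    and \<eta> :: "'k poly \<Rightarrow> 'h"
  assumes v_val: "field_valuation v"
    and v_onto: "\<forall>g. \<exists>a. a \<noteq> 0 \<and> v a = g"
    and v_nontriv: "\<exists>a. a \<noteq> 0 \<and> v a \<noteq> 0"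
    and \<iota>_emb: "order_embedding \<iota>"
    and jq_hull: "divisible_hull jq"
    and jr_hull: "divisible_hull jr"
    and \<iota>Q_hom: "\<forall>a b. \<iota>Q (a + b) = \<iota>Q a + \<iota>Q b"
    and \<iota>Q_ext: "\<forall>g. \<iota>Q (jq g) = jr (\<iota> g)"
    and \<eta>_val: "poly_valuation \<eta>"
    and \<eta>_ext: "\<forall>c. c \<noteq> 0 \<longrightarrow> \<eta> [:c:] = \<iota> (v c)"
  shows "((\<forall>\<mu>\<in>valsV v jq. \<forall>f. f \<noteq> 0 \<longrightarrow> jr (\<eta> f) \<le> \<iota>Q (\<mu> f))
            \<longleftrightarrow> (\<forall>\<gamma>. jr (\<eta> [:0, 1:]) < \<iota>Q \<gamma>))
       \<and> ((\<forall>\<gamma>. jr (\<eta> [:0, 1:]) < \<iota>Q \<gamma>) \<longleftrightarrow> val_equiv \<eta> (mu_minus_inf v))"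
proof -
  interpret valuation_extension v \<iota> jq jr \<iota>Q \<eta>
    using assms by unfold_locales
  have below_iff: "(\<forall>\<gamma>. jr (\<eta> [:0, 1:]) < \<iota>Q \<gamma>) \<longleftrightarrow> infinitely_below (\<eta> [:0, 1:]) (range \<iota>)"
    by (rule less_hull_iff_infinitely_below)
  show ?thesis
  proof (intro conjI iffI allI ballI impI)
    show "jr (\<eta> [:0, 1:]) < \<iota>Q \<gamma>"
      if "\<forall>\<mu>\<in>valsV v jq. \<forall>f. f \<noteq> 0 \<longrightarrow> jr (\<eta> f) \<le> \<iota>Q (\<mu> f)" for \<gamma>
      using that by (rule less_hull_if_le_valsV)
    show "jr (\<eta> f) \<le> \<iota>Q (\<mu> f)"
      if "\<forall>\<gamma>. jr (\<eta> [:0, 1:]) < \<iota>Q \<gamma>" "\<mu> \<in> valsV v jq" "f \<noteq> 0" for \<mu> f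
      using that by (rule le_valsV_if_less_hull)
    show "val_equiv \<eta> (mu_minus_inf v)" if "\<forall>\<gamma>. jr (\<eta> [:0, 1:]) < \<iota>Q \<gamma>"
      using that below_iff val_equiv_if_infinitely_below by blast
    show "jr (\<eta> [:0, 1:]) < \<iota>Q \<gamma>" if "val_equiv \<eta> (mu_minus_inf v)" for \<gamma>
      using that below_iff infinitely_below_if_val_equiv by blast
  qed
qed

end
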